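(* Let $n \geqslant 1$, let $\lambda$ be an integer partition with $\lambda_1+\ell(\lambda)-1=n$, and let $c \in \mathfrak{S}_{n+1}$ be a Coxeter element. Then for every filling $f$ of $\lambda$ and every $k \in \{1,\ldots,n\}$, \[\sum_{\varepsilon=1}^{\delta_k} \mathcal{RSK}_{\lambda,c}(f)(\langle k,\varepsilon\rangle_\lambda) = \sum_{b \in \square_k(\lambda)} f(b).\]
   Context: Ferrers diagram $\mathrm{Fer}(\lambda)=\{(i,j):j\le\lambda_i\}$; fillings are maps $\mathrm{Fer}(\lambda)\to\mathbb{N}$. Diagonals $D_k(\lambda)=\{(i,j)\in\mathrm{Fer}(\lambda):\lambda_1+i-j=k\}$, $\delta_k=\max\{\min(i,j):(i,j)\in D_k(\lambda)\}$, $(i,j)\in D_k(\lambda)$ has coordinates $\langle k,\delta\rangle_\lambda$ with $\delta=\delta_k-\min(i,j)+1$; $\square_k(\lambda)$ is the order ideal of $\mathrm{Fer}(\lambda)$ (componentwise order) generated by $D_k(\lambda)$. Coxeter element: product of $s_1,\dots,s_n$ ($s_i=(i,i+1)$), each exactly once. Row/column labels: label the unit segments of the south-east boundary of $\mathrm{Fer}(\lambda)$ by $1,\dots,n+1$ from top-right to bottom-left; rows/columns inherit labels; $\mathbf L$ = row labels, $\mathbf R$ = column labels; $[\ell,r]$ = box with row label $\ell$, column label $r$ (exists iff $\ell<r$). Greene–Kleitman: for acyclic $G$ and $g:G_0\to\mathbb{N}$, $M_t$ = max over $t$-tuples of (possibly one-vertex) directed paths of the sum of $g$ over the union of their vertices,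 $M_0=0$, $\mathrm{GK}_G(g)=(M_t-M_{t-1})_{t\ge1}$. $\mathcal{RSK}_{\lambda,c}$: $\mathrm{AR}(c)$ has vertices the transpositions $(i,j)$, $1\le i<j\le n+1$, and arrows $(i,j)\to(i,c(j))$ if $i<c(j)$, $(i,j)\to(c(i),j)$ if $c(i)<j$; $\mathrm{AR}^{[k]}(c)$ is its full subgraph on $(\ell,r)$ with $\ell\le k<r$. $\mathrm{rep}_{\lambda,c}(f)(\ell,r)=f([\ell,r])$ if $\ell\in\mathbf L,r\in\mathbf R,\ell<r$, else $0$; $\mathcal{RSK}_{\lambda,c}(f)(\langle k,\delta\rangle_\lambda)$ is the $\delta$-th part of $\mathrm{GK}_{\mathrm{AR}^{[k]}(c)}$ of the restriction of $\mathrm{rep}_{\lambda,c}(f)$. *)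

theory Defs
  imports Main
begin

section \<open>Partitions, Ferrers diagrams, diagonals (1-based indices, English convention)\<close>

definition is_partition :: "nat list \<Rightarrow> bool" where
  "is_partition lam = (sorted_wrt (\<ge>) lam \<and> (\<forall>x\<in>set lam. 0 < x))"

definition part :: "nat list \<Rightarrow> nat \<Rightarrow> nat" where
  "part lam i = (if 1 \<le> i \<and> i \<le> length lam then lam ! (i - 1) else 0)"

definition lam1 :: "nat list \<Rightarrow> nat" where
  "lam1 lam = part lam 1"

definition Fer :: "nat list \<Rightarrow> (nat \<times> nat) set" where
  "Fer lam = {(i, j). 1 \<le> i \<and> i \<le> length lam \<and> 1 \<le> j \<and> j \<le> part lam i}"

text \<open>D_k: boxes with lam_1 + i - j = k (written without subtraction).\<close>
definition diag :: "nat list \<Rightarrow> nat \<Rightarrow> (nat \<times> nat) set" where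
  "diag lam k = {(i, j) \<in> Fer lam. lam1 lam + i = k + j}"

definition delta :: "nat list \<Rightarrow> nat \<Rightarrow> nat" where
  "delta lam k = Max ((\<lambda>(i, j). min i j) ` diag lam k)"

definition coord :: "nat list \<Rightarrow> nat \<Rightarrow> nat \<Rightarrow> nat \<times> nat" where
  "coord lam k d = (THE b. b \<in> diag lam k \<and> min (fst b) (snd b) + d = delta lam k + 1)"

definition sqk :: "nat list \<Rightarrow> nat \<Rightarrow> (nat \<times> nat) set" where
  "sqk lam k = {b \<in> Fer lam. \<exists>d\<in>diag lam k. fst b \<le> fst d \<and> snd b \<le> snd d}"

definition colLen :: "nat list \<Rightarrow> nat \<Rightarrow> nat" where
  "colLen lam j = card {i. 1 \<le> i \<and> i \<le> length lam \<and> j \<le> part lam i}"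

text \<open>Labels of south-east boundary segments, numbered 1..n+1 from top-right to
  bottom-left: row i gets the label of the vertical segment ending row i,
  column j the label of the horizontal segment ending column j.\<close>
definition rowlab :: "nat list \<Rightarrow> nat \<Rightarrow> nat" where
  "rowlab lam i = i + (lam1 lam - part lam i)"

definition collab :: "nat list \<Rightarrow> nat \<Rightarrow> nat" where
  "collab lam j = colLen lam j + (lam1 lam - j) + 1"

definition Lset :: "nat list \<Rightarrow> nat set" where
  "Lset lam = rowlab lam ` {1..length lam}"

definition Rset :: "nat list \<Rightarrow> nat set" where
  "Rset lam = collab lam ` {1..lam1 lam}"

definition rep :: "nat list \<Rightarrow> (nat \<times> nat \<Rightarrow> nat) \<Rightarrow> nat \<times> nat \<Rightarrow> nat" where
  "rep lam f = (\<lambda>(l, r). if l \<in> Lset lam \<and> r \<in> Rset lam \<and> l < r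
      then f (THE b. b \<in> Fer lam \<and> rowlab lam (fst b) = l \<and> collab lam (snd b) = r)
      else 0)"

definition sgen :: "nat \<Rightarrow> nat \<Rightarrow> nat" where
  "sgen i = (\<lambda>x. if x = i then i + 1 else if x = i + 1 then i else x)"

definition coxeter :: "nat \<Rightarrow> (nat \<Rightarrow> nat) \<Rightarrow> bool" where
  "coxeter n c = (\<exists>xs. distinct xs \<and> set xs = {1..n} \<and> c = foldr (\<lambda>i acc. sgen i \<circ> acc) xs id)"

definition ARverts :: "nat \<Rightarrow> (nat \<times> nat) set" where
  "ARverts n = {(i, j). 1 \<le> i \<and> i < j \<and> j \<le> n + 1}"

definition ARedge :: "(nat \<Rightarrow> nat) \<Rightarrow> nat \<times> nat \<Rightarrow> nat \<times> nat \<Rightarrow> bool" where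
  "ARedge c u v = ((fst u < c (snd u) \<and> v = (fst u, c (snd u)))
                 \<or> (c (fst u) < snd u \<and> v = (c (fst u), snd u)))"

definition ARk_verts :: "nat \<Rightarrow> nat \<Rightarrow> (nat \<times> nat) set" where
  "ARk_verts n k = {(l, r) \<in> ARverts n. l \<le> k \<and> k < r}"

definition is_dpath :: "'v set \<Rightarrow> ('v \<Rightarrow> 'v \<Rightarrow> bool) \<Rightarrow> 'v list \<Rightarrow> bool" where
  "is_dpath V E p = (p \<noteq> [] \<and> distinct p \<and> set p \<subseteq> V \<and>
      (\<forall>i. i + 1 < length p \<longrightarrow> E (p ! i) (p ! (i + 1))))"

definition GK_M :: "'v set \<Rightarrow> ('v \<Rightarrow> 'v \<Rightarrow> bool) \<Rightarrow> ('v \<Rightarrow> nat) \<Rightarrow> nat \<Rightarrow> nat" where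
  "GK_M V E g t = Max {sum g (\<Union>p\<in>set ps. set p) | ps. length ps = t \<and> (\<forall>p\<in>set ps. is_dpath V E p)}"

definition GK :: "'v set \<Rightarrow> ('v \<Rightarrow> 'v \<Rightarrow> bool) \<Rightarrow> ('v \<Rightarrow> nat) \<Rightarrow> nat \<Rightarrow> nat" where
  "GK V E g t = GK_M V E g t - GK_M V E g (t - 1)"

definition RSK :: "nat list \<Rightarrow> (nat \<Rightarrow> nat) \<Rightarrow> (nat \<times> nat \<Rightarrow> nat) \<Rightarrow> nat \<times> nat \<Rightarrow> nat" where
  "RSK lam c f b =
     (let n = lam1 lam + length lam - 1;
          k = lam1 lam + fst b - snd b;
          d = delta lam k + 1 - min (fst b) (snd b)
      in GK (ARk_verts n k) (ARedge c) (rep lam f) d)"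

end

theory Submission
  imports Defs
begin

text \<open>
  By telescoping, the left-hand side is the largest weight of \<open>rep lam f\<close> covered by
  \<open>delta lam k\<close> directed paths in \<open>ARk_verts n k\<close>. Every vertex \<open>(l, r)\<close> there has
  \<open>l \<le> k < r\<close>; if its weight is nonzero it is the label pair of a box of \<open>lam\<close>, and that
  box then lies in \<open>sqk lam k\<close>. As distinct boxes have distinct label pairs, no family of
  paths weighs more than the sum of \<open>f\<close> over \<open>sqk lam k\<close>.

  Conversely, \<open>sqk lam k\<close> lies in the first \<open>delta lam k\<close> rows or in the first
  \<open>delta lam k\<close> columns. By induction on \<open>j\<close>, each of \<open>{j<..n+1}\<close> and \<open>{1..j}\<close> is
  traversed by a single arc \<open>x, c x, c (c x), \<dots>\<close> of the permutation \<open>c\<close>. So for a row label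
  \<open>l \<le> k\<close> the vertices \<open>(l, r)\<close> with \<open>r > k\<close> form a path, as do the vertices \<open>(l, r)\<close> with
  \<open>l \<le> k\<close> for a column label \<open>r > k\<close>, and \<open>delta lam k\<close> of these paths cover the labels
  of \<open>sqk lam k\<close>.
\<close>

section \<open>Ferrers diagrams and boundary labels\<close>

lemma part_antimono:
  assumes "is_partition lam" "1 \<le> i" "i \<le> i'" "i' \<le> length lam"
  shows "part lam i' \<le> part lam i"
proof (cases "i = i'")
  case False
  then have "i - 1 < i' - 1" using assms by auto
  moreover have "sorted_wrt (\<ge>) lam" using assms(1) by (simp add: is_partition_def)
  ultimately have "lam ! (i' - 1) \<le> lam ! (i - 1)"
    using assms by (auto simp: sorted_wrt_iff_nth_less)
  then show ?thesis using assms by (simp add: part_def)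
qed simp

lemma part_pos:
  assumes "is_partition lam" "1 \<le> i" "i \<le> length lam"
  shows "0 < part lam i"
  using assms nth_mem[of "i - 1" lam] by (auto simp: is_partition_def part_def)

lemma part_le_lam1:
  assumes "is_partition lam"
  shows "part lam i \<le> lam1 lam"
  using part_antimono[OF assms, of 1 i] by (auto simp: lam1_def part_def)

lemma mem_Fer_iff:
  assumes "is_partition lam"
  shows "(i, j) \<in> Fer lam \<longleftrightarrow> i \<in> {1..length lam} \<and> j \<in> {1..lam1 lam} \<and> j \<le> part lam i"
  using part_le_lam1[OF assms, of i] by (auto simp: Fer_def)

lemma Fer_downward_closed:
  assumes "is_partition lam" "(i, j) \<in> Fer lam" "1 \<le> i'" "i' \<le> i" "1 \<le> j'" "j' \<le> j"
  shows "(i', j') \<in> Fer lam"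
  using assms part_antimono[OF assms(1), of i' i] by (auto simp: Fer_def)

lemma Fer_eq_Sigma: "Fer lam = (SIGMA i:{1..length lam}. {1..part lam i})"
  by (auto simp: Fer_def)

lemma finite_Fer: "finite (Fer lam)"
  by (simp add: Fer_eq_Sigma)

lemma le_colLen_iff:
  assumes "is_partition lam" "1 \<le> i" "i \<le> length lam"
  shows "i \<le> colLen lam j \<longleftrightarrow> j \<le> part lam i"
proof
  assume "i \<le> colLen lam j"
  show "j \<le> part lam i"
  proof (rule ccontr)
    assume "\<not> j \<le> part lam i"
    have "{i'. 1 \<le> i' \<and> i' \<le> length lam \<and> j \<le> part lam i'} \<subseteq> {1..<i}"
    proof
      fix i' assume "i' \<in> {i'. 1 \<le> i' \<and> i' \<le> length lam \<and> j \<le> part lam i'}"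
      then show "i' \<in> {1..<i}"
        using part_antimono[OF assms(1,2), of i'] \<open>\<not> j \<le> part lam i\<close> by (auto intro: le_trans)
    qed
    then have "colLen lam j \<le> card {1..<i}"
      unfolding colLen_def by (intro card_mono) auto
    with \<open>i \<le> colLen lam j\<close> assms(2) show False by simp
  qed
next
  assume "j \<le> part lam i"
  then have "{1..i} \<subseteq> {i'. 1 \<le> i' \<and> i' \<le> length lam \<and> j \<le> part lam i'}"
    using assms part_antimono[OF assms(1)] by (auto intro: le_trans)
  then have "card {1..i} \<le> colLen lam j"
    unfolding colLen_def by (intro card_mono) auto
  then show "i \<le> colLen lam j" by simp
qed

lemma colLen_le_length: "colLen lam j \<le> length lam"
proof -
  have "colLen lam j \<le> card {1..length lam}"
    unfolding colLen_def by (intro card_mono) auto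
  then show ?thesis by simp
qed

lemma colLen_antimono: "j \<le> j' \<Longrightarrow> colLen lam j' \<le> colLen lam j"
  unfolding colLen_def by (rule card_mono) auto

lemma mem_Fer_iff_colLen:
  assumes "is_partition lam"
  shows "(i, j) \<in> Fer lam \<longleftrightarrow> 1 \<le> i \<and> 1 \<le> j \<and> i \<le> colLen lam j"
  using le_colLen_iff[OF assms, of i j] colLen_le_length[of lam j] by (auto simp: Fer_def)

lemma rowlab_less:
  assumes "is_partition lam" "1 \<le> i" "i < i'" "i' \<le> length lam"
  shows "rowlab lam i < rowlab lam i'"
  using part_antimono[OF assms(1,2), of i'] assms part_le_lam1[OF assms(1), of i]
    part_le_lam1[OF assms(1), of i'] by (simp add: rowlab_def)

lemma rowlab_le_iff:
  assumes "is_partition lam" "i \<in> {1..length lam}" "i' \<in> {1..length lam}"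
  shows "rowlab lam i \<le> rowlab lam i' \<longleftrightarrow> i \<le> i'"
  using rowlab_less[OF assms(1), of i i'] rowlab_less[OF assms(1), of i' i] assms
  by (cases i i' rule: linorder_cases) auto

lemma collab_less:
  assumes "j < j'" "j' \<le> lam1 lam"
  shows "collab lam j' < collab lam j"
  using colLen_antimono[of j j' lam] assms by (simp add: collab_def)

lemma collab_le_iff:
  assumes "j \<in> {1..lam1 lam}" "j' \<in> {1..lam1 lam}"
  shows "collab lam j \<le> collab lam j' \<longleftrightarrow> j' \<le> j"
  using collab_less[of j j' lam] collab_less[of j' j lam] assms
  by (cases j j' rule: linorder_cases) auto

lemma collab_le: "j \<in> {1..lam1 lam} \<Longrightarrow> collab lam j \<le> lam1 lam + length lam"
  using colLen_le_length[of lam j] by (auto simp: collab_def)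

lemma rowlab_less_collab_iff:
  assumes "is_partition lam" "i \<in> {1..length lam}" "j \<in> {1..lam1 lam}"
  shows "rowlab lam i < collab lam j \<longleftrightarrow> j \<le> part lam i"
  using assms le_colLen_iff[OF assms(1), of i j] part_le_lam1[OF assms(1), of i]
  by (auto simp: rowlab_def collab_def)

definition box_label :: "nat list \<Rightarrow> nat \<times> nat \<Rightarrow> nat \<times> nat" where
  "box_label lam b = (rowlab lam (fst b), collab lam (snd b))"

lemma inj_on_box_label:
  assumes "is_partition lam"
  shows "inj_on (box_label lam) (Fer lam)"
proof (rule inj_onI, clarify)
  fix i j i' j'
  assume "(i, j) \<in> Fer lam" "(i', j') \<in> Fer lam" "box_label lam (i, j) = box_label lam (i', j')"
  then have "i \<in> {1..length lam}" "i' \<in> {1..length lam}" "j \<in> {1..lam1 lam}" "j' \<in> {1..lam1 lam}"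
    and "rowlab lam i = rowlab lam i'" "collab lam j = collab lam j'"
    by (auto simp: mem_Fer_iff[OF assms] box_label_def)
  then show "i = i' \<and> j = j'"
    using rowlab_le_iff[OF assms] collab_le_iff by (metis order.refl order.antisym)
qed

lemma rep_box_label:
  assumes "is_partition lam" "b \<in> Fer lam"
  shows "rep lam f (box_label lam b) = f b"
proof -
  obtain i j where b: "b = (i, j)" by force
  then have "rowlab lam i \<in> Lset lam" "collab lam j \<in> Rset lam" "rowlab lam i < collab lam j"
    using assms rowlab_less_collab_iff[OF assms(1), of i j]
    by (auto simp: Lset_def Rset_def mem_Fer_iff)
  moreover have "(THE b'. b' \<in> Fer lam \<and> rowlab lam (fst b') = rowlab lam i
      \<and> collab lam (snd b') = collab lam j) = b"
    using inj_on_box_label[OF assms(1)] assms(2) b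
    by (intro the_equality) (auto simp: inj_on_def box_label_def)
  ultimately show ?thesis using b by (simp add: rep_def box_label_def)
qed

lemma rep_nonzero_imp_box_label:
  assumes "is_partition lam" "rep lam f v \<noteq> 0"
  shows "v \<in> box_label lam ` Fer lam"
proof -
  obtain l r where v: "v = (l, r)" by force
  then have "l \<in> Lset lam" "r \<in> Rset lam" "l < r"
    using assms(2) by (auto simp: rep_def split: if_splits)
  then obtain i j where "i \<in> {1..length lam}" "j \<in> {1..lam1 lam}" "l = rowlab lam i" "r = collab lam j"
    by (auto simp: Lset_def Rset_def)
  moreover from this \<open>l < r\<close> have "(i, j) \<in> Fer lam"
    using rowlab_less_collab_iff[OF assms(1)] mem_Fer_iff[OF assms(1)] by simp
  ultimately show ?thesis
    using v by (auto simp: box_label_def intro!: image_eqI[where x = "(i, j)"])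
qed

lemma sum_rep_box_label:
  assumes "is_partition lam" "B \<subseteq> Fer lam"
  shows "sum (rep lam f) (box_label lam ` B) = sum f B"
proof -
  have "sum (rep lam f) (box_label lam ` B) = sum (rep lam f \<circ> box_label lam) B"
    using inj_on_subset[OF inj_on_box_label[OF assms(1)] assms(2)] by (rule sum.reindex)
  also have "\<dots> = sum f B"
    using rep_box_label[OF assms(1)] assms(2) by (intro sum.cong) auto
  finally show ?thesis .
qed

lemma sqk_subset_Fer: "sqk lam k \<subseteq> Fer lam"
  by (auto simp: sqk_def)

lemma mem_sqk_iff:
  assumes "is_partition lam"
  shows "(i, j) \<in> sqk lam k \<longleftrightarrow> (i, j) \<in> Fer lam \<and> rowlab lam i \<le> k \<and> k < collab lam j"
proof
  assume "(i, j) \<in> sqk lam k"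
  then obtain i' j' where ij: "(i, j) \<in> Fer lam" and ij': "(i', j') \<in> Fer lam"
    and diag: "lam1 lam + i' = k + j'" and "i \<le> i'" "j \<le> j'"
    by (auto simp: sqk_def diag_def)
  then have "rowlab lam i \<le> rowlab lam i'" "collab lam j' \<le> collab lam j"
    using rowlab_le_iff[OF assms] collab_le_iff mem_Fer_iff[OF assms] by auto
  moreover have "rowlab lam i' \<le> k"
    using ij' diag part_le_lam1[OF assms, of i'] by (auto simp: Fer_def rowlab_def)
  moreover have "k < collab lam j'"
    using ij' diag mem_Fer_iff_colLen[OF assms] mem_Fer_iff[OF assms] by (auto simp: collab_def)
  ultimately show "(i, j) \<in> Fer lam \<and> rowlab lam i \<le> k \<and> k < collab lam j"
    using ij by simp
next
  assume ij: "(i, j) \<in> Fer lam \<and> rowlab lam i \<le> k \<and> k < collab lam j"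
  then have bounds: "1 \<le> i" "1 \<le> j" "j \<le> part lam i" "part lam i \<le> lam1 lam"
    using part_le_lam1[OF assms] by (auto simp: Fer_def)
  show "(i, j) \<in> sqk lam k"
  proof (cases "i + lam1 lam \<le> k + j")
    case True
    define i' where "i' = k + j - lam1 lam"
    have "(i', j) \<in> diag lam k"
      using True ij bounds mem_Fer_iff_colLen[OF assms]
      by (auto simp: diag_def i'_def collab_def)
    moreover have "i \<le> i'" using True by (simp add: i'_def)
    ultimately show ?thesis using ij unfolding sqk_def by force
  next
    case False
    define j' where "j' = i + lam1 lam - k"
    have "(i, j') \<in> diag lam k"
      using False ij bounds by (auto simp: diag_def j'_def Fer_def rowlab_def)
    moreover have "j \<le> j'" using False by (simp add: j'_def)
    ultimately show ?thesis using ij unfolding sqk_def by force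
  qed
qed

lemma sum_rep_le_sum_sqk:
  assumes "is_partition lam" "finite U" "\<And>l r. (l, r) \<in> U \<Longrightarrow> l \<le> k \<and> k < r"
  shows "sum (rep lam f) U \<le> sum f (sqk lam k)"
proof -
  have "rep lam f v = 0" if "v \<in> U - box_label lam ` sqk lam k" for v
  proof (rule ccontr)
    assume "rep lam f v \<noteq> 0"
    then obtain i j where "(i, j) \<in> Fer lam" "v = box_label lam (i, j)"
      using rep_nonzero_imp_box_label[OF assms(1)] by (metis imageE surj_pair)
    moreover have "(i, j) \<in> sqk lam k"
      using calculation that assms(3)[of "rowlab lam i" "collab lam j"] mem_sqk_iff[OF assms(1)]
      by (auto simp: box_label_def)
    ultimately show False using that by blast
  qed
  then have "sum (rep lam f) U = sum (rep lam f) (U \<inter> box_label lam ` sqk lam k)"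
    using assms(2) by (intro sum.mono_neutral_right) auto
  also have "\<dots> \<le> sum (rep lam f) (box_label lam ` sqk lam k)"
    using finite_subset[OF sqk_subset_Fer finite_Fer] by (intro sum_mono2) auto
  also have "\<dots> = sum f (sqk lam k)"
    using sum_rep_box_label[OF assms(1) sqk_subset_Fer] .
  finally show ?thesis .
qed

section \<open>Diagonals\<close>

lemma finite_diag: "finite (diag lam k)"
  using finite_Fer by (rule finite_subset[rotated]) (auto simp: diag_def)

lemma delta_ge: "(i, j) \<in> diag lam k \<Longrightarrow> min i j \<le> delta lam k"
  unfolding delta_def using finite_diag by (intro Max_ge) force+

lemma diag_subset_sqk: "diag lam k \<subseteq> sqk lam k"
  by (force simp: sqk_def diag_def)

lemma delta_attained:
  assumes "diag lam k \<noteq> {}"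
  obtains i0 j0 where "(i0, j0) \<in> diag lam k" "min i0 j0 = delta lam k"
proof -
  have "delta lam k \<in> (\<lambda>(i, j). min i j) ` diag lam k"
    unfolding delta_def using finite_diag assms by (intro Max_in) auto
  then show ?thesis using that by fastforce
qed

lemma diag_nonempty:
  assumes "is_partition lam" "1 \<le> k" "k < lam1 lam + length lam"
  shows "diag lam k \<noteq> {}"
proof -
  have len: "1 \<le> length lam"
    using assms(3) by (cases lam) (auto simp: lam1_def part_def)
  then have "length lam \<le> colLen lam 1"
    using le_colLen_iff[OF assms(1) len order.refl] part_pos[OF assms(1) len order.refl] by simp
  then have "(1, 1) \<in> sqk lam k"
    using assms len part_pos[OF assms(1) order.refl len]
    by (auto simp: mem_sqk_iff Fer_def rowlab_def collab_def lam1_def)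
  then show ?thesis by (auto simp: sqk_def)
qed

lemma diag_delta_cases:
  assumes "is_partition lam" "diag lam k \<noteq> {}"
  obtains (rows) i0 j0 where "(i0, j0) \<in> diag lam k" "delta lam k = i0" "\<forall>(i, j)\<in>sqk lam k. i \<le> i0"
    | (cols) i0 j0 where "(i0, j0) \<in> diag lam k" "delta lam k = j0" "\<forall>(i, j)\<in>sqk lam k. j \<le> j0"
proof -
  obtain i0 j0 where max: "(i0, j0) \<in> diag lam k" "min i0 j0 = delta lam k"
    using delta_attained[OF assms(2)] by blast
  have below: "\<exists>i' j'. (i', j') \<in> diag lam k \<and> i \<le> i' \<and> j \<le> j'" if sq: "(i, j) \<in> sqk lam k" for i j
  proof -
    obtain d where "d \<in> diag lam k" "fst (i, j) \<le> fst d" "snd (i, j) \<le> snd d"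
      using sq unfolding sqk_def by blast
    then show ?thesis by (cases d) auto
  qed
  show ?thesis
  proof (cases "k < lam1 lam")
    case True
    then have min_fst: "min i j = i" if "(i, j) \<in> diag lam k" for i j
      using that by (auto simp: diag_def)
    have "i \<le> i0" if sq: "(i, j) \<in> sqk lam k" for i j
    proof -
      obtain i' j' where "(i', j') \<in> diag lam k" "i \<le> i'"
        using below[OF sq] by blast
      then show ?thesis
        using delta_ge[of i' j' lam k] min_fst[of i' j'] max min_fst[OF max(1)] by simp
    qed
    then show ?thesis using rows[OF max(1)] max min_fst[OF max(1)] by auto
  next
    case False
    then have min_snd: "min i j = j" if "(i, j) \<in> diag lam k" for i j
      using that by (auto simp: diag_def)
    have "j \<le> j0" if sq: "(i, j) \<in> sqk lam k" for i j
    proof -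
      obtain i' j' where "(i', j') \<in> diag lam k" "j \<le> j'"
        using below[OF sq] by blast
      then show ?thesis
        using delta_ge[of i' j' lam k] min_snd[of i' j'] max min_snd[OF max(1)] by simp
    qed
    then show ?thesis using cols[OF max(1)] max min_snd[OF max(1)] by auto
  qed
qed

lemma diag_eq_if_min_eq:
  assumes "(i, j) \<in> diag lam k" "(i', j') \<in> diag lam k" "min i j = min i' j'"
  shows "(i, j) = (i', j')"
  using assms by (auto simp: diag_def min_def split: if_splits)

lemma coord_in_diag:
  assumes "is_partition lam" "diag lam k \<noteq> {}" "e \<in> {1..delta lam k}"
  shows "coord lam k e \<in> diag lam k \<and> min (fst (coord lam k e)) (snd (coord lam k e)) + e = delta lam k + 1"
proof -
  let ?P = "\<lambda>b. b \<in> diag lam k \<and> min (fst b) (snd b) + e = delta lam k + 1"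
  obtain i0 j0 where max: "(i0, j0) \<in> diag lam k" "min i0 j0 = delta lam k"
    using delta_attained[OF assms(2)] by blast
  define t where "t = e - 1"
  have t: "t < i0" "t < j0" using max assms(3) by (auto simp: t_def)
  have "(i0 - t, j0 - t) \<in> Fer lam"
    using Fer_downward_closed[OF assms(1), of i0 j0 "i0 - t" "j0 - t"] max(1) t
    by (simp add: diag_def)
  then have ex: "?P (i0 - t, j0 - t)"
    using max t assms(3) by (auto simp: diag_def t_def)
  have "b = (i0 - t, j0 - t)" if "?P b" for b
    using that ex diag_eq_if_min_eq[of "fst b" "snd b" lam k "i0 - t" "j0 - t"] by simp
  with ex show ?thesis
    unfolding coord_def by (rule theI)
qed

lemma RSK_coord:
  assumes "is_partition lam" "diag lam k \<noteq> {}" "e \<in> {1..delta lam k}"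
  shows "RSK lam c f (coord lam k e)
    = GK (ARk_verts (lam1 lam + length lam - 1) k) (ARedge c) (rep lam f) e"
proof -
  obtain i j where ij: "coord lam k e = (i, j)" by force
  then have "lam1 lam + i - j = k" "delta lam k + 1 - min i j = e"
    using coord_in_diag[OF assms] by (auto simp: diag_def)
  then show ?thesis using ij by (simp add: RSK_def Let_def)
qed

section \<open>Greene--Kleitman invariants\<close>

lemma is_dpath_iff_successively:
  "is_dpath V E p \<longleftrightarrow> p \<noteq> [] \<and> distinct p \<and> set p \<subseteq> V \<and> successively E p"
  by (simp add: is_dpath_def successively_conv_nth)

lemma GK_M_0: "GK_M V E g 0 = 0"
proof -
  have "{sum g (\<Union>p\<in>set ps. set p) | ps. length ps = 0 \<and> (\<forall>p\<in>set ps. is_dpath V E p)} = {0}"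
    by auto
  then show ?thesis by (simp add: GK_M_def)
qed

lemma finite_GK_values:
  fixes g :: "'v \<Rightarrow> nat"
  assumes "finite V"
  shows "finite {sum g (\<Union>p\<in>set ps. set p) | ps. length ps = t \<and> (\<forall>p\<in>set ps. is_dpath V E p)}"
proof (rule finite_subset)
  show "{sum g (\<Union>p\<in>set ps. set p) | ps. length ps = t \<and> (\<forall>p\<in>set ps. is_dpath V E p)} \<subseteq> {..sum g V}"
    using assms by (force simp: is_dpath_def intro!: sum_mono2)
qed simp

lemma GK_M_ge:
  fixes g :: "'v \<Rightarrow> nat"
  assumes "finite V" "length ps = t" "\<forall>p\<in>set ps. is_dpath V E p"
  shows "sum g (\<Union>p\<in>set ps. set p) \<le> GK_M V E g t"
  unfolding GK_M_def using assms by (intro Max_ge finite_GK_values) auto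

lemma GK_M_le:
  fixes g :: "'v \<Rightarrow> nat"
  assumes "finite V" "V \<noteq> {}"
    and "\<And>ps. length ps = t \<Longrightarrow> \<forall>p\<in>set ps. is_dpath V E p \<Longrightarrow> sum g (\<Union>p\<in>set ps. set p) \<le> s"
  shows "GK_M V E g t \<le> s"
proof -
  obtain v where "v \<in> V" using assms(2) by blast
  then have "length (replicate t [v]) = t \<and> (\<forall>p\<in>set (replicate t [v]). is_dpath V E p)"
    by (simp add: is_dpath_def)
  then show ?thesis
    unfolding GK_M_def using assms by (subst Max_le_iff[OF finite_GK_values]) blast+
qed

lemma GK_M_mono:
  fixes g :: "'v \<Rightarrow> nat"
  assumes "finite V" "v \<in> V"
  shows "GK_M V E g t \<le> GK_M V E g (Suc t)"
proof (rule GK_M_le)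
  fix ps assume ps: "length ps = t" "\<forall>p\<in>set ps. is_dpath V E p"
  have single: "is_dpath V E [v]" using assms(2) by (simp add: is_dpath_def)
  have "sum g (\<Union>p\<in>set ps. set p) \<le> sum g (\<Union>p\<in>set ([v] # ps). set p)"
    using ps single assms(1) by (intro sum_mono2) (auto simp: is_dpath_def intro: finite_subset)
  also have "\<dots> \<le> GK_M V E g (Suc t)"
    using ps single assms(1) by (intro GK_M_ge) auto
  finally show "sum g (\<Union>p\<in>set ps. set p) \<le> GK_M V E g (Suc t)" .
qed (use assms in auto)

lemma sum_GK_eq_GK_M:
  fixes g :: "'v \<Rightarrow> nat"
  assumes "finite V" "V \<noteq> {}"
  shows "(\<Sum>t = 1..d. GK V E g t) = GK_M V E g d"
proof (induction d)
  case 0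
  then show ?case by (simp add: GK_M_0)
next
  case (Suc d)
  obtain v where "v \<in> V" using assms(2) by blast
  then show ?case
    using Suc GK_M_mono[OF assms(1), of v E g d] by (simp add: GK_def)
qed

section \<open>Arcs of an orbit\<close>

definition orbit_arc :: "('a \<Rightarrow> 'a) \<Rightarrow> 'a set \<Rightarrow> 'a list \<Rightarrow> bool" where
  "orbit_arc c S xs \<longleftrightarrow> is_dpath S (\<lambda>x y. c x = y) xs \<and> set xs = S"

lemma orbit_arc_singleton: "orbit_arc c {a} [a]"
  by (simp add: orbit_arc_def is_dpath_def)

lemma orbit_arc_snoc:
  assumes "orbit_arc c S xs" "a \<notin> S" "c (last xs) = a"
  shows "orbit_arc c (insert a S) (xs @ [a])"
  using assms by (auto simp: orbit_arc_def is_dpath_iff_successively successively_append_iff)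

lemma orbit_arc_Cons:
  assumes "orbit_arc c S xs" "a \<notin> S" "c a = hd xs"
  shows "orbit_arc c (insert a S) (a # xs)"
  using assms by (auto simp: orbit_arc_def is_dpath_iff_successively successively_Cons)

lemma successively_iterate_step:
  "successively (\<lambda>x y. c x = y) xs \<Longrightarrow> x \<in> set xs \<Longrightarrow> x \<noteq> last xs \<Longrightarrow> c x \<in> set xs"
  by (induction xs rule: induct_list012) auto

lemma successively_iterate_pred:
  "successively (\<lambda>x y. c x = y) xs \<Longrightarrow> y \<in> set xs \<Longrightarrow> y \<noteq> hd xs \<Longrightarrow> \<exists>x\<in>set xs. c x = y"
  by (induction xs rule: induct_list012) auto

lemma orbit_arc_insert:
  assumes arc: "orbit_arc c S xs" and "inj c" "a \<notin> S" "c a \<noteq> a"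
    and not_closed: "\<exists>x\<in>S. c x \<notin> S"
    and one_exit: "\<exists>!x. x \<in> insert a S \<and> c x \<notin> insert a S"
  shows "\<exists>ys. orbit_arc c (insert a S) ys"
proof (cases "c (last xs) = a")
  case True
  then show ?thesis using orbit_arc_snoc[OF arc \<open>a \<notin> S\<close>] by blast
next
  case False
  have xs: "xs \<noteq> []" "set xs = S" "successively (\<lambda>x y. c x = y) xs"
    using arc by (auto simp: orbit_arc_def is_dpath_iff_successively)
  have "c (last xs) \<notin> S"
    using successively_iterate_step[OF xs(3)] not_closed xs by metis
  then have "c a \<in> S"
    using one_exit False \<open>a \<notin> S\<close> \<open>c a \<noteq> a\<close> xs last_in_set by blast
  have "c a = hd xs"
  proof (rule ccontr)
    assume "c a \<noteq> hd xs"
    then obtain x where "x \<in> S" "c x = c a"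
      using successively_iterate_pred[OF xs(3)] \<open>c a \<in> S\<close> xs(2) by blast
    then show False using \<open>inj c\<close> \<open>a \<notin> S\<close> by (metis injD)
  qed
  then show ?thesis using orbit_arc_Cons[OF arc \<open>a \<notin> S\<close>] by blast
qed

section \<open>Coxeter elements\<close>

definition sgen_prod :: "nat list \<Rightarrow> nat \<Rightarrow> nat" where
  "sgen_prod is = foldr (\<lambda>i acc. sgen i \<circ> acc) is id"

lemma sgen_prod_Nil [simp]: "sgen_prod [] = id"
  by (simp add: sgen_prod_def)

lemma sgen_prod_Cons [simp]: "sgen_prod (i # is) = sgen i \<circ> sgen_prod is"
  by (simp add: sgen_prod_def)

lemma sgen_prod_append: "sgen_prod (is @ js) = sgen_prod is \<circ> sgen_prod js"
  by (induction "is") (simp_all add: comp_assoc)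

lemma sgen_prod_split: "sgen_prod (u @ j # v) = sgen_prod u \<circ> sgen j \<circ> sgen_prod v"
  by (simp add: sgen_prod_append comp_assoc)

lemma bij_sgen: "bij (sgen i)"
  by (rule involuntory_imp_bij) (auto simp: sgen_def)

lemma bij_sgen_prod: "bij (sgen_prod is)"
  by (induction "is") (metis bij_id sgen_prod_Nil, metis bij_comp bij_sgen sgen_prod_Cons)

lemma sgen_prod_less_iff: "j \<notin> set is \<Longrightarrow> j < sgen_prod is x \<longleftrightarrow> j < x"
  by (induction "is") (auto simp: sgen_def)

lemma sgen_prod_fixes: "(\<And>i. i \<in> set is \<Longrightarrow> i \<noteq> x \<and> i + 1 \<noteq> x) \<Longrightarrow> sgen_prod is x = x"
  by (induction "is") (auto simp: sgen_def)

locale coxeter_word =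
  fixes n :: nat and w :: "nat list" and c :: "nat \<Rightarrow> nat"
  assumes n_pos: "1 \<le> n" and distinct_w: "distinct w" and set_w: "set w = {1..n}"
    and c_eq: "c = sgen_prod w"
begin

lemma split_at_generator:
  assumes "j \<in> {1..n}"
  obtains u v where "w = u @ j # v" "j \<notin> set u" "j \<notin> set v" "set v \<subseteq> {1..n}"
    "c = sgen_prod u \<circ> sgen j \<circ> sgen_prod v"
proof -
  obtain u v where w: "w = u @ j # v" using assms set_w by (metis split_list)
  then show ?thesis
    using that distinct_w set_w by (auto simp: c_eq sgen_prod_split)
qed

lemma inj_c: "inj c"
  using bij_sgen_prod[of w] by (simp add: c_eq bij_is_inj)

lemma c_range: "x \<in> {1..n + 1} \<Longrightarrow> c x \<in> {1..n + 1}"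
  using sgen_prod_less_iff[of 0 w x] sgen_prod_less_iff[of "n + 1" w x] set_w
  by (auto simp: c_eq)

text \<open>The cut between \<open>j\<close> and \<open>j + 1\<close> is crossed only by the single factor \<open>sgen j\<close>
  of \<open>c\<close>, so \<open>c\<close> crosses it exactly once in each direction.\<close>

lemma ex1_exit_upper_interval:
  assumes "j \<in> {1..n}"
  shows "\<exists>!x. x \<in> {j<..n + 1} \<and> c x \<notin> {j<..n + 1}"
proof -
  obtain u v where "w = u @ j # v" "j \<notin> set u" "j \<notin> set v" "set v \<subseteq> {1..n}"
    and c: "c = sgen_prod u \<circ> sgen j \<circ> sgen_prod v"
    by (rule split_at_generator[OF assms])
  have exit_iff: "c x \<notin> {j<..n + 1} \<longleftrightarrow> sgen_prod v x = Suc j" if "x \<in> {j<..n + 1}" for x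
  proof -
    have "j < sgen_prod v x"
      using that sgen_prod_less_iff[OF \<open>j \<notin> set v\<close>] by simp
    moreover have "j < c x \<longleftrightarrow> j < sgen j (sgen_prod v x)"
      using sgen_prod_less_iff[OF \<open>j \<notin> set u\<close>] by (simp add: c)
    moreover have "c x \<le> n + 1"
      using that assms c_range[of x] by simp
    ultimately show ?thesis by (auto simp: sgen_def)
  qed
  obtain x0 where x0: "sgen_prod v x0 = Suc j"
    using bij_sgen_prod[of v] by (metis bij_pointE)
  have "n + 1 \<notin> set v" using \<open>set v \<subseteq> {1..n}\<close> by auto
  then have "x0 \<in> {j<..n + 1}"
    using x0 assms sgen_prod_less_iff[OF \<open>j \<notin> set v\<close>, of x0]
      sgen_prod_less_iff[of "n + 1" v x0] by auto
  moreover have "x = x0" if "sgen_prod v x = Suc j" for x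
    using that x0 bij_sgen_prod[of v] by (metis bij_pointE)
  ultimately show ?thesis
    using exit_iff x0 by (intro ex1I[of _ x0]) blast+
qed

lemma ex1_exit_lower_interval:
  assumes "j \<in> {1..n}"
  shows "\<exists>!x. x \<in> {1..j} \<and> c x \<notin> {1..j}"
proof -
  obtain u v where "w = u @ j # v" "j \<notin> set u" "j \<notin> set v" "set v \<subseteq> {1..n}"
    and c: "c = sgen_prod u \<circ> sgen j \<circ> sgen_prod v"
    by (rule split_at_generator[OF assms])
  have exit_iff: "c x \<notin> {1..j} \<longleftrightarrow> sgen_prod v x = j" if "x \<in> {1..j}" for x
  proof -
    have "\<not> j < sgen_prod v x"
      using that sgen_prod_less_iff[OF \<open>j \<notin> set v\<close>] by simp
    moreover have "j < c x \<longleftrightarrow> j < sgen j (sgen_prod v x)"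
      using sgen_prod_less_iff[OF \<open>j \<notin> set u\<close>] by (simp add: c)
    moreover have "1 \<le> c x"
      using that assms c_range[of x] by simp
    ultimately show ?thesis by (auto simp: sgen_def split: if_splits)
  qed
  obtain x0 where x0: "sgen_prod v x0 = j"
    using bij_sgen_prod[of v] by (metis bij_pointE)
  have "0 \<notin> set v" using \<open>set v \<subseteq> {1..n}\<close> by auto
  then have "x0 \<in> {1..j}"
    using x0 assms sgen_prod_less_iff[OF \<open>j \<notin> set v\<close>, of x0]
      sgen_prod_less_iff[of 0 v x0] by auto
  moreover have "x = x0" if "sgen_prod v x = j" for x
    using that x0 bij_sgen_prod[of v] by (metis bij_pointE)
  ultimately show ?thesis
    using exit_iff x0 by (intro ex1I[of _ x0]) blast+
qed

lemma c_no_fixpoint: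
  assumes "x \<in> {1..n + 1}"
  shows "c x \<noteq> x"
proof (cases "x \<le> n")
  case True
  then have "x \<in> {1..n}" using assms by simp
  then obtain u v where w: "w = u @ x # v" and "x \<notin> set u" "x \<notin> set v" "set v \<subseteq> {1..n}"
    and c: "c = sgen_prod u \<circ> sgen x \<circ> sgen_prod v"
    by (rule split_at_generator)
  show ?thesis
  proof (cases "x - 1 \<in> set v")
    case False
    then have "sgen_prod v x = x"
      using \<open>x \<notin> set v\<close> by (intro sgen_prod_fixes) auto
    then have "x < c x"
      using sgen_prod_less_iff[OF \<open>x \<notin> set u\<close>, of "Suc x"] by (simp add: c sgen_def)
    then show ?thesis by simp
  next
    case True
    then obtain v1 v2 where v: "v = v1 @ (x - 1) # v2" by (meson split_list)
    have "2 \<le> x" using True \<open>set v \<subseteq> {1..n}\<close> by force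
    let ?u = "u @ x # v1"
    have w': "w = ?u @ (x - 1) # v2" using w v by simp
    then have "x - 1 \<notin> set ?u" "x - 1 \<notin> set v2" "x \<notin> set v2"
      using distinct_w by auto
    have "c = sgen_prod ?u \<circ> sgen (x - 1) \<circ> sgen_prod v2"
      unfolding c_eq w' by (rule sgen_prod_split)
    moreover have "sgen_prod v2 x = x"
      using \<open>x - 1 \<notin> set v2\<close> \<open>x \<notin> set v2\<close> by (intro sgen_prod_fixes) auto
    moreover have "sgen (x - 1) x = x - 1"
      using \<open>2 \<le> x\<close> by (simp add: sgen_def)
    ultimately have "c x = sgen_prod ?u (x - 1)" by simp
    then have "c x \<le> x - 1"
      using sgen_prod_less_iff[OF \<open>x - 1 \<notin> set ?u\<close>, of "x - 1"] by simp
    then show ?thesis using \<open>2 \<le> x\<close> by simp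
  qed
next
  case False
  then have x: "x = n + 1" using assms by simp
  have "n \<in> {1..n}" using n_pos by simp
  then obtain u v where "w = u @ n # v" "n \<notin> set u" "n \<notin> set v" "set v \<subseteq> {1..n}"
    and c: "c = sgen_prod u \<circ> sgen n \<circ> sgen_prod v"
    by (rule split_at_generator)
  then have "sgen_prod v x = x"
    using x by (intro sgen_prod_fixes) auto
  then have "c x \<le> n"
    using sgen_prod_less_iff[OF \<open>n \<notin> set u\<close>, of n] x by (simp add: c sgen_def)
  then show ?thesis using x by simp
qed

lemma upper_interval_orbit_arc:
  assumes "1 \<le> j" "j \<le> n"
  shows "\<exists>xs. orbit_arc c {j<..n + 1} xs"
  using assms(2)
proof (induction j rule: inc_induct)
  case base
  have "{n<..n + 1} = {n + 1}" by auto
  then show ?case using orbit_arc_singleton by metis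
next
  case (step i)
  then obtain xs where arc: "orbit_arc c {Suc i<..n + 1} xs" by blast
  have T: "insert (Suc i) {Suc i<..n + 1} = {i<..n + 1}" using step.hyps by auto
  have "\<exists>ys. orbit_arc c (insert (Suc i) {Suc i<..n + 1}) ys"
  proof (rule orbit_arc_insert[OF arc inj_c])
    show "c (Suc i) \<noteq> Suc i" using step.hyps by (intro c_no_fixpoint) auto
    have "Suc i \<in> {1..n}" using step.hyps by simp
    from ex1_exit_upper_interval[OF this]
    show "\<exists>x\<in>{Suc i<..n + 1}. c x \<notin> {Suc i<..n + 1}" by blast
    show "\<exists>!x. x \<in> insert (Suc i) {Suc i<..n + 1} \<and> c x \<notin> insert (Suc i) {Suc i<..n + 1}"
      unfolding T using ex1_exit_upper_interval[of i] step.hyps assms(1) by simp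
  qed simp
  then show ?case unfolding T .
qed

lemma lower_interval_orbit_arc:
  assumes "1 \<le> j" "j \<le> n"
  shows "\<exists>xs. orbit_arc c {1..j} xs"
  using assms
proof (induction j rule: dec_induct)
  case base
  show ?case using orbit_arc_singleton by (metis atLeastAtMost_singleton)
next
  case (step i)
  then obtain xs where arc: "orbit_arc c {1..i} xs" by auto
  have T: "insert (Suc i) {1..i} = {1..Suc i}" using step.hyps by auto
  have "\<exists>ys. orbit_arc c (insert (Suc i) {1..i}) ys"
  proof (rule orbit_arc_insert[OF arc inj_c])
    show "c (Suc i) \<noteq> Suc i" using step.prems by (intro c_no_fixpoint) auto
    have "i \<in> {1..n}" using step.hyps step.prems by simp
    from ex1_exit_lower_interval[OF this]
    show "\<exists>x\<in>{1..i}. c x \<notin> {1..i}" by blast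
    show "\<exists>!x. x \<in> insert (Suc i) {1..i} \<and> c x \<notin> insert (Suc i) {1..i}"
      unfolding T using ex1_exit_lower_interval[of "Suc i"] step.hyps step.prems by simp
  qed simp
  then show ?case unfolding T .
qed

end

section \<open>Paths in the Auslander--Reiten quiver\<close>

lemma row_dpath:
  assumes "orbit_arc c {k<..n + 1} xs" "1 \<le> l" "l \<le> k"
  shows "is_dpath (ARk_verts n k) (ARedge c) (map (Pair l) xs)"
proof -
  have xs: "xs \<noteq> []" "distinct xs" "set xs = {k<..n + 1}" "successively (\<lambda>x y. c x = y) xs"
    using assms(1) by (auto simp: orbit_arc_def is_dpath_iff_successively)
  have "successively (ARedge c) (map (Pair l) xs)"
    unfolding successively_map using xs(4)
    by (rule successively_mono) (use xs(3) assms(3) in \<open>auto simp: ARedge_def\<close>)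
  then show ?thesis
    using xs assms(2,3)
    by (auto simp: is_dpath_iff_successively distinct_map inj_on_def ARk_verts_def ARverts_def)
qed

lemma col_dpath:
  assumes "orbit_arc c {1..k} xs" "k < r" "r \<le> n + 1"
  shows "is_dpath (ARk_verts n k) (ARedge c) (map (\<lambda>l. (l, r)) xs)"
proof -
  have xs: "xs \<noteq> []" "distinct xs" "set xs = {1..k}" "successively (\<lambda>x y. c x = y) xs"
    using assms(1) by (auto simp: orbit_arc_def is_dpath_iff_successively)
  have "successively (ARedge c) (map (\<lambda>l. (l, r)) xs)"
    unfolding successively_map using xs(4)
    by (rule successively_mono) (use xs(3) assms(2) in \<open>auto simp: ARedge_def\<close>)
  then show ?thesis
    using xs assms(2,3)
    by (auto simp: is_dpath_iff_successively distinct_map inj_on_def ARk_verts_def ARverts_def)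
qed

lemma finite_ARk_verts: "finite (ARk_verts n k)"
  by (rule finite_subset[of _ "{1..n + 1} \<times> {1..n + 1}"]) (auto simp: ARk_verts_def ARverts_def)

lemma ARk_verts_nonempty: "k \<in> {1..n} \<Longrightarrow> ARk_verts n k \<noteq> {}"
  by (auto simp: ARk_verts_def ARverts_def intro!: exI[of _ "(k, k + 1)"])

context coxeter_word
begin

lemma sqk_covered_by_row_paths:
  assumes "is_partition lam" "lam1 lam + length lam = n + 1" "k \<in> {1..n}"
    and "(i0, j0) \<in> diag lam k" "\<forall>(i, j)\<in>sqk lam k. i \<le> i0"
  shows "\<exists>ps. length ps = i0 \<and> (\<forall>p\<in>set ps. is_dpath (ARk_verts n k) (ARedge c) p)
    \<and> box_label lam ` sqk lam k \<subseteq> (\<Union>p\<in>set ps. set p)"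
proof -
  obtain xs where arc: "orbit_arc c {k<..n + 1} xs"
    using upper_interval_orbit_arc assms(3) by auto
  define ps where "ps = map (\<lambda>i. map (Pair (rowlab lam i)) xs) [1..<i0 + 1]"
  have "(i0, j0) \<in> sqk lam k" using diag_subset_sqk assms(4) by blast
  then have i0: "(i0, j0) \<in> Fer lam" "rowlab lam i0 \<le> k"
    using mem_sqk_iff[OF assms(1)] by auto
  have "rowlab lam i \<le> k" if "i \<in> {1..i0}" for i
    using that i0 rowlab_le_iff[OF assms(1), of i i0] by (auto simp: Fer_def)
  moreover have "i \<le> rowlab lam i" for i by (simp add: rowlab_def)
  ultimately have "is_dpath (ARk_verts n k) (ARedge c) (map (Pair (rowlab lam i)) xs)"
    if "i \<in> {1..i0}" for i
    using that row_dpath[OF arc] by (meson atLeastAtMost_iff le_trans)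
  then have "\<forall>p\<in>set ps. is_dpath (ARk_verts n k) (ARedge c) p"
    by (auto simp: ps_def)
  moreover have "box_label lam b \<in> (\<Union>p\<in>set ps. set p)" if "b \<in> sqk lam k" for b
  proof -
    obtain i j where b: "b = (i, j)" by force
    have "i \<in> {1..i0}" "collab lam j \<in> set xs"
      using that b assms(2,5) collab_le[of j lam] arc
      by (auto simp: mem_sqk_iff[OF assms(1)] mem_Fer_iff[OF assms(1)] orbit_arc_def)
    then show ?thesis
      using b by (force simp: ps_def box_label_def)
  qed
  moreover have "length ps = i0" by (simp add: ps_def)
  ultimately show ?thesis by blast
qed

lemma sqk_covered_by_col_paths:
  assumes "is_partition lam" "lam1 lam + length lam = n + 1" "k \<in> {1..n}"
    and "(i0, j0) \<in> diag lam k" "\<forall>(i, j)\<in>sqk lam k. j \<le> j0"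
  shows "\<exists>ps. length ps = j0 \<and> (\<forall>p\<in>set ps. is_dpath (ARk_verts n k) (ARedge c) p)
    \<and> box_label lam ` sqk lam k \<subseteq> (\<Union>p\<in>set ps. set p)"
proof -
  obtain xs where arc: "orbit_arc c {1..k} xs"
    using lower_interval_orbit_arc assms(3) by auto
  define ps where "ps = map (\<lambda>j. map (\<lambda>l. (l, collab lam j)) xs) [1..<j0 + 1]"
  have "(i0, j0) \<in> sqk lam k" using diag_subset_sqk assms(4) by blast
  then have j0: "j0 \<in> {1..lam1 lam}" "k < collab lam j0"
    using mem_sqk_iff[OF assms(1)] mem_Fer_iff[OF assms(1)] by auto
  have "k < collab lam j" "collab lam j \<le> n + 1" if "j \<in> {1..j0}" for j
    using that j0 collab_le_iff[of j0 lam j] collab_le[of j lam] assms(2) by auto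
  then have "is_dpath (ARk_verts n k) (ARedge c) (map (\<lambda>l. (l, collab lam j)) xs)"
    if "j \<in> {1..j0}" for j
    using that col_dpath[OF arc] by blast
  then have "\<forall>p\<in>set ps. is_dpath (ARk_verts n k) (ARedge c) p"
    by (auto simp: ps_def)
  moreover have "box_label lam b \<in> (\<Union>p\<in>set ps. set p)" if "b \<in> sqk lam k" for b
  proof -
    obtain i j where b: "b = (i, j)" by force
    have "j \<in> {1..j0}" "rowlab lam i \<in> set xs"
      using that b assms(5) arc
      by (auto simp: mem_sqk_iff[OF assms(1)] Fer_def rowlab_def orbit_arc_def)
    then show ?thesis
      using b by (force simp: ps_def box_label_def)
  qed
  moreover have "length ps = j0" by (simp add: ps_def)
  ultimately show ?thesis by blast
qed

lemma sqk_covered_by_paths: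
  assumes "is_partition lam" "lam1 lam + length lam = n + 1" "k \<in> {1..n}"
  shows "\<exists>ps. length ps = delta lam k \<and> (\<forall>p\<in>set ps. is_dpath (ARk_verts n k) (ARedge c) p)
    \<and> box_label lam ` sqk lam k \<subseteq> (\<Union>p\<in>set ps. set p)"
proof -
  have "diag lam k \<noteq> {}"
    using assms by (intro diag_nonempty) auto
  then show ?thesis
  proof (rule diag_delta_cases[OF assms(1)])
    fix i0 j0
    assume "(i0, j0) \<in> diag lam k" "delta lam k = i0" "\<forall>(i, j)\<in>sqk lam k. i \<le> i0"
    then show ?thesis using sqk_covered_by_row_paths[OF assms] by simp
  next
    fix i0 j0
    assume "(i0, j0) \<in> diag lam k" "delta lam k = j0" "\<forall>(i, j)\<in>sqk lam k. j \<le> j0"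
    then show ?thesis using sqk_covered_by_col_paths[OF assms] by simp
  qed
qed

lemma GK_M_eq_sum_sqk:
  assumes "is_partition lam" "lam1 lam + length lam = n + 1" "k \<in> {1..n}"
  shows "GK_M (ARk_verts n k) (ARedge c) (rep lam f) (delta lam k) = sum f (sqk lam k)"
proof (rule antisym)
  show "GK_M (ARk_verts n k) (ARedge c) (rep lam f) (delta lam k) \<le> sum f (sqk lam k)"
  proof (rule GK_M_le[OF finite_ARk_verts ARk_verts_nonempty[OF assms(3)]])
    fix ps assume "\<forall>p\<in>set ps. is_dpath (ARk_verts n k) (ARedge c) p"
    then have "(\<Union>p\<in>set ps. set p) \<subseteq> ARk_verts n k"
      by (auto simp: is_dpath_def)
    then show "sum (rep lam f) (\<Union>p\<in>set ps. set p) \<le> sum f (sqk lam k)"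
      using finite_subset[OF _ finite_ARk_verts]
      by (intro sum_rep_le_sum_sqk[OF assms(1)]) (auto simp: ARk_verts_def)
  qed
next
  obtain ps where ps: "length ps = delta lam k" "\<forall>p\<in>set ps. is_dpath (ARk_verts n k) (ARedge c) p"
    and cover: "box_label lam ` sqk lam k \<subseteq> (\<Union>p\<in>set ps. set p)"
    using sqk_covered_by_paths[OF assms] by blast
  have "sum f (sqk lam k) = sum (rep lam f) (box_label lam ` sqk lam k)"
    using sum_rep_box_label[OF assms(1) sqk_subset_Fer] by simp
  also have "\<dots> \<le> sum (rep lam f) (\<Union>p\<in>set ps. set p)"
    using cover by (intro sum_mono2) auto
  also have "\<dots> \<le> GK_M (ARk_verts n k) (ARedge c) (rep lam f) (delta lam k)"
    using ps finite_ARk_verts by (intro GK_M_ge)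
  finally show "sum f (sqk lam k) \<le> GK_M (ARk_verts n k) (ARedge c) (rep lam f) (delta lam k)" .
qed

end

theorem lemma6p8:
  fixes n k :: nat and lam :: "nat list" and c :: "nat \<Rightarrow> nat" and f :: "nat \<times> nat \<Rightarrow> nat"
  assumes "1 \<le> n"
    and "is_partition lam"
    and "lam1 lam + length lam = n + 1"
    and "coxeter n c"
    and "k \<in> {1..n}"
  shows "(\<Sum>e = 1..delta lam k. RSK lam c f (coord lam k e)) = (\<Sum>b\<in>sqk lam k. f b)"
proof -
  obtain w where "distinct w" "set w = {1..n}" "c = sgen_prod w"
    using assms(4) by (auto simp: coxeter_def sgen_prod_def)
  with assms(1) interpret coxeter_word n w c by unfold_locales
  have "diag lam k \<noteq> {}"
    using assms by (intro diag_nonempty) auto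
  then have "(\<Sum>e = 1..delta lam k. RSK lam c f (coord lam k e))
      = (\<Sum>e = 1..delta lam k. GK (ARk_verts n k) (ARedge c) (rep lam f) e)"
    using RSK_coord[OF assms(2)] assms(3) by (intro sum.cong) auto
  also have "\<dots> = GK_M (ARk_verts n k) (ARedge c) (rep lam f) (delta lam k)"
    using finite_ARk_verts ARk_verts_nonempty[OF assms(5)] by (rule sum_GK_eq_GK_M)
  also have "\<dots> = (\<Sum>b\<in>sqk lam k. f b)"
    using GK_M_eq_sum_sqk[OF assms(2,3,5)] .
  finally show ?thesis .
qed

end
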